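(* For any integers $k_1<k_2$, the function $\sin:(k_1\pi,k_2\pi)\to\mathbb{R}$ is amenable.
   Context: Relative distance on $\mathbb{R}$: $\mathrm{dist}(x,y)=0$ if $x=y=0$, $\mathrm{dist}(x,y)=|\log(y/x)|$ if $xy>0$, and $\mathrm{dist}(x,y)=\infty$ otherwise. For a real analytic function $f$ on an open set $\Omega\subseteq\mathbb{R}$, not identically zero, the condition number is $\kappa(f,x)=0$ if $x=0$, $\kappa(f,x)=\infty$ if $x\neq0$ and $f(x)=0$, and $\kappa(f,x)=|x|\,|f'(x)|/|f(x)|$ otherwise; $\mu(f,x)=1+\kappa(f,x)$. $f:\Omega\to\mathbb{R}$ is amenable if there is $C>0$ such that for every $x\in\Omega$ with $\kappa(f,x)<\infty$, the set $B_x=\{y\in\mathbb{R}:\mathrm{dist}(y,x)<1/(C\mu(f,x))\}$ is contained in $\Omega$ and $\mu(f,y)\leq C\mu(f,x)$ for all $y\in B_x$. *)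

theory Defs
  imports "HOL-Analysis.Analysis"
begin

definition rel_dist :: "real \<Rightarrow> real \<Rightarrow> ereal" where
  "rel_dist x y =
     (if x = 0 \<and> y = 0 then 0
      else if x * y > 0 then ereal \<bar>ln (y / x)\<bar>
      else \<infinity>)"

definition cond_num :: "(real \<Rightarrow> real) \<Rightarrow> real \<Rightarrow> ereal" where
  "cond_num f x =
     (if x = 0 then 0
      else if f x = 0 then \<infinity>
      else ereal (\<bar>x\<bar> * \<bar>deriv f x\<bar> / \<bar>f x\<bar>))"

definition mu_cond :: "(real \<Rightarrow> real) \<Rightarrow> real \<Rightarrow> ereal" where
  "mu_cond f x = 1 + cond_num f x"

definition amenable :: "(real \<Rightarrow> real) \<Rightarrow> real set \<Rightarrow> bool" where
  "amenable f \<Omega> \<longleftrightarrow>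
     (\<exists>C::real. C > 0 \<and>
        (\<forall>x\<in>\<Omega>. cond_num f x < \<infinity> \<longrightarrow>
           (let B = {y. rel_dist y x < 1 / (ereal C * mu_cond f x)} in
              B \<subseteq> \<Omega> \<and> (\<forall>y\<in>B. mu_cond f y \<le> ereal C * mu_cond f x))))"

end

theory Submission
  imports Defs
begin

text \<open>Away from the zeros of \<open>sin\<close>, \<open>\<mu>(sin, x) = 1 + \<bar>x\<bar> \<bar>cos x\<bar> / \<bar>sin x\<bar>\<close>. On an interval
  where \<open>\<bar>x\<bar> \<le> M\<close> (with \<open>M \<ge> 1\<close>) one has \<open>\<bar>x\<bar> \<le> 2M (\<bar>sin x\<bar> + \<bar>x\<bar> \<bar>cos x\<bar>) = 2M \<bar>sin x\<bar> \<mu>(sin, x)\<close>,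
  so with \<open>C = 1 + 8M\<close> the relative ball of radius \<open>1 / (C \<mu>(sin, x))\<close> around \<open>x\<close> lies in the
  absolute ball of radius \<open>\<bar>sin x\<bar> / 2\<close>. As \<open>sin\<close> is 1-Lipschitz and vanishes at the endpoints
  \<open>k\<pi>\<close>, that ball stays inside the interval, \<open>\<bar>sin y\<bar> \<ge> \<bar>sin x\<bar> / 2\<close> on it, and hence
  \<open>\<mu>(sin, y) \<le> 1 + \<bar>y\<bar> / \<bar>sin y\<bar> \<le> 1 + 4 \<bar>x\<bar> / \<bar>sin x\<bar> \<le> C \<mu>(sin, x)\<close>.
  At \<open>x = 0\<close> the relative ball is just \<open>{0}\<close>.\<close>

lemma abs_sin_diff_le:
  fixes x y :: real
  shows "\<bar>sin x - sin y\<bar> \<le> \<bar>x - y\<bar>"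
proof -
  have "\<bar>sin x - sin y\<bar> = 2 * \<bar>sin ((x - y) / 2)\<bar> * \<bar>cos ((x + y) / 2)\<bar>"
    by (simp add: sin_diff_sin abs_mult)
  also have "\<dots> \<le> 2 * \<bar>(x - y) / 2\<bar> * 1"
    using abs_sin_x_le_abs_x[of "(x - y) / 2"] by (intro mult_mono) auto
  finally show ?thesis by simp
qed

lemma abs_exp_minus_one_le:
  fixes t :: real
  assumes "\<bar>t\<bar> \<le> 1"
  shows "\<bar>exp t - 1\<bar> \<le> 2 * \<bar>t\<bar>"
proof (cases "t \<ge> 0")
  case True
  then have "exp t \<le> 1 + t + t\<^sup>2"
    using assms exp_bound by auto
  moreover have "t\<^sup>2 \<le> t"
    using True assms by (simp add: power2_eq_square mult_left_le)
  ultimately show ?thesis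
    using True by simp
next
  case False
  then show ?thesis
    using exp_ge_add_one_self[of t] exp_le_one_iff[of t] by linarith
qed

lemma rel_dist_less_ereal_zero_right: "rel_dist y 0 < ereal r \<Longrightarrow> y = 0"
  by (auto simp: rel_dist_def split: if_splits)

lemma abs_diff_le_of_rel_dist_less:
  assumes "x \<noteq> 0" and "rel_dist y x < ereal d" and "d \<le> 1"
  shows "\<bar>y - x\<bar> \<le> 2 * d * \<bar>x\<bar>"
proof -
  have xy: "x * y > 0" and "\<bar>ln (x / y)\<bar> < d"
    using assms(1,2) by (auto simp: rel_dist_def mult.commute split: if_splits)
  moreover have "ln (y / x) = - ln (x / y)"
    using xy by (metis inverse_divide ln_inverse zero_less_divide_iff zero_less_mult_iff)
  ultimately have ln_le: "\<bar>ln (y / x)\<bar> \<le> d"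
    by simp
  have "exp (ln (y / x)) = y / x"
    using xy by (auto simp: zero_less_divide_iff zero_less_mult_iff)
  then have "y - x = x * (exp (ln (y / x)) - 1)"
    using assms(1) by (simp add: field_simps)
  then have "\<bar>y - x\<bar> = \<bar>x\<bar> * \<bar>exp (ln (y / x)) - 1\<bar>"
    by (simp add: abs_mult)
  also have "\<dots> \<le> \<bar>x\<bar> * (2 * d)"
    using abs_exp_minus_one_le[of "ln (y / x)"] ln_le assms(3) by (intro mult_left_mono) auto
  finally show ?thesis
    by (simp add: mult.commute)
qed

lemma abs_le_sin_plus_x_cos:
  fixes x M :: real
  assumes "\<bar>x\<bar> \<le> M" and "1 \<le> M"
  shows "\<bar>x\<bar> \<le> 2 * M * (\<bar>sin x\<bar> + \<bar>x\<bar> * \<bar>cos x\<bar>)"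
proof (cases "\<bar>cos x\<bar> \<ge> 1/2")
  case True
  then have "\<bar>x\<bar> \<le> 2 * (\<bar>x\<bar> * \<bar>cos x\<bar>)"
    using mult_left_mono[of "1/2" "\<bar>cos x\<bar>" "\<bar>x\<bar>"] by simp
  also have "\<dots> \<le> 2 * M * (\<bar>x\<bar> * \<bar>cos x\<bar>)"
    using assms(2) by (intro mult_right_mono) auto
  also have "\<dots> \<le> 2 * M * (\<bar>sin x\<bar> + \<bar>x\<bar> * \<bar>cos x\<bar>)"
    using assms(2) by (intro mult_left_mono) auto
  finally show ?thesis .
next
  case False
  then have "(cos x)\<^sup>2 < 1/4"
    using abs_le_square_iff[of "1/2" "cos x"] by (simp add: power_divide)
  then have "1/4 \<le> (sin x)\<^sup>2"
    using sin_squared_eq[of x] by linarith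
  then have "1/2 \<le> \<bar>sin x\<bar>"
    using abs_le_square_iff[of "1/2" "sin x"] by (simp add: power_divide)
  then have "M \<le> 2 * M * \<bar>sin x\<bar>"
    using mult_left_mono[of "1/2" "\<bar>sin x\<bar>" "2 * M"] assms(2) by simp
  also have "\<dots> \<le> 2 * M * (\<bar>sin x\<bar> + \<bar>x\<bar> * \<bar>cos x\<bar>)"
    using assms(2) by (intro mult_left_mono) auto
  finally show ?thesis
    using assms(1) by linarith
qed

lemma mem_interval_of_abs_diff_less_abs_sin:
  fixes a b x y :: real
  assumes "sin a = 0" and "sin b = 0" and "x \<in> {a<..<b}" and "\<bar>y - x\<bar> < \<bar>sin x\<bar>"
  shows "y \<in> {a<..<b}"
proof (rule ccontr)
  assume "y \<notin> {a<..<b}"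
  then obtain c where "sin c = 0" and "\<bar>c - x\<bar> \<le> \<bar>y - x\<bar>"
  proof (cases "y \<le> a")
    case True
    then show ?thesis
      using that[of a] assms(1,3) by simp
  next
    case False
    then show ?thesis
      using that[of b] assms(2,3) \<open>y \<notin> {a<..<b}\<close> by simp
  qed
  then show False
    using abs_sin_diff_le[of c x] assms(4) by simp
qed

definition mu_sin :: "real \<Rightarrow> real" where
  "mu_sin x = 1 + \<bar>x\<bar> * \<bar>cos x\<bar> / \<bar>sin x\<bar>"

lemma mu_cond_zero: "mu_cond f 0 = 1"
  by (simp add: mu_cond_def cond_num_def)

lemma mu_cond_sin: "x \<noteq> 0 \<Longrightarrow> sin x \<noteq> 0 \<Longrightarrow> mu_cond sin x = ereal (mu_sin x)"
  by (simp add: mu_cond_def cond_num_def mu_sin_def DERIV_imp_deriv[OF DERIV_sin] one_ereal_def)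

lemma mu_sin_ge_one: "1 \<le> mu_sin x"
  by (simp add: mu_sin_def)

lemma abs_le_mu_sin:
  assumes "\<bar>x\<bar> \<le> M" and "1 \<le> M" and "sin x \<noteq> 0"
  shows "\<bar>x\<bar> \<le> 2 * M * \<bar>sin x\<bar> * mu_sin x"
proof -
  have "\<bar>sin x\<bar> * mu_sin x = \<bar>sin x\<bar> + \<bar>x\<bar> * \<bar>cos x\<bar>"
    using assms(3) by (simp add: mu_sin_def field_simps)
  then show ?thesis
    using abs_le_sin_plus_x_cos[OF assms(1,2)] by (simp add: mult.assoc)
qed

lemma sin_rel_ball_subset_ball:
  assumes "\<bar>x\<bar> \<le> M" and "1 \<le> M" and "x \<noteq> 0" and "sin x \<noteq> 0"
    and "rel_dist y x < ereal (1 / ((1 + 8 * M) * mu_sin x))"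
  shows "\<bar>y - x\<bar> \<le> \<bar>sin x\<bar> / 2" and "\<bar>y\<bar> \<le> 2 * \<bar>x\<bar>"
proof -
  define d where "d = 1 / ((1 + 8 * M) * mu_sin x)"
  have "(1 + 8 * M) * 1 \<le> (1 + 8 * M) * mu_sin x"
    using assms(2) mu_sin_ge_one by (intro mult_left_mono) auto
  then have d_pos: "0 < d" and d_le: "d \<le> 1/2"
    using assms(2) by (auto simp: d_def field_simps)
  have "rel_dist y x < ereal d"
    using assms(5) by (simp add: d_def)
  with d_le have close: "\<bar>y - x\<bar> \<le> 2 * d * \<bar>x\<bar>"
    using abs_diff_le_of_rel_dist_less[OF assms(3)] by simp
  have "2 * d * \<bar>x\<bar> \<le> 2 * d * (2 * M * \<bar>sin x\<bar> * mu_sin x)"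
    using abs_le_mu_sin[OF assms(1,2,4)] d_pos by (intro mult_left_mono) auto
  also have "\<dots> = 4 * M * \<bar>sin x\<bar> * (d * mu_sin x)"
    by (simp add: algebra_simps)
  also have "\<dots> = 4 * M * \<bar>sin x\<bar> / (1 + 8 * M)"
    using mu_sin_ge_one[of x] by (simp add: d_def)
  also have "\<dots> \<le> \<bar>sin x\<bar> / 2"
    using assms(2) by (simp add: field_simps)
  finally show "\<bar>y - x\<bar> \<le> \<bar>sin x\<bar> / 2"
    using close by simp
  have "2 * d * \<bar>x\<bar> \<le> \<bar>x\<bar>"
    using d_le mult_right_mono[of "2 * d" 1 "\<bar>x\<bar>"] by simp
  then show "\<bar>y\<bar> \<le> 2 * \<bar>x\<bar>"
    using close by linarith
qed

lemma mu_sin_le_of_close: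
  assumes "\<bar>x\<bar> \<le> M" and "1 \<le> M" and "sin x \<noteq> 0"
    and "\<bar>y - x\<bar> \<le> \<bar>sin x\<bar> / 2" and "\<bar>y\<bar> \<le> 2 * \<bar>x\<bar>"
  shows "mu_sin y \<le> (1 + 8 * M) * mu_sin x"
proof -
  have sin_y: "\<bar>sin x\<bar> / 2 \<le> \<bar>sin y\<bar>"
    using abs_sin_diff_le[of y x] assms(4) by linarith
  have "0 < \<bar>sin x\<bar>"
    using assms(3) by simp
  have "mu_sin y \<le> 1 + \<bar>y\<bar> / \<bar>sin y\<bar>"
    using sin_y by (auto simp: mu_sin_def divide_right_mono mult_left_le)
  also have "\<dots> \<le> 1 + 2 * \<bar>x\<bar> / (\<bar>sin x\<bar> / 2)"
    using sin_y assms(5) \<open>0 < \<bar>sin x\<bar>\<close> by (intro add_left_mono frac_le) auto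
  also have "\<dots> \<le> 1 + 8 * M * mu_sin x"
    using abs_le_mu_sin[OF assms(1-3)] \<open>0 < \<bar>sin x\<bar>\<close> by (simp add: field_simps)
  also have "\<dots> \<le> (1 + 8 * M) * mu_sin x"
    using mu_sin_ge_one[of x] by (simp add: algebra_simps)
  finally show ?thesis .
qed

lemma mu_cond_sin_rel_ball:
  assumes "\<bar>x\<bar> \<le> M" and "1 \<le> M" and "x \<noteq> 0" and "sin x \<noteq> 0"
    and "rel_dist y x < 1 / (ereal (1 + 8 * M) * mu_cond sin x)"
  shows "\<bar>y - x\<bar> < \<bar>sin x\<bar>" and "mu_cond sin y \<le> ereal (1 + 8 * M) * mu_cond sin x"
proof -
  have "rel_dist y x < ereal (1 / ((1 + 8 * M) * mu_sin x))"
    using assms(5) assms(2) mu_sin_ge_one[of x]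
    by (simp add: mu_cond_sin[OF assms(3,4)] one_ereal_def)
  note close = sin_rel_ball_subset_ball[OF assms(1-4) this]
  moreover have "0 < \<bar>sin x\<bar>"
    using assms(4) by simp
  ultimately show "\<bar>y - x\<bar> < \<bar>sin x\<bar>"
    by linarith
  have "\<bar>sin y - sin x\<bar> \<le> \<bar>sin x\<bar> / 2"
    using abs_sin_diff_le[of y x] close(1) by linarith
  then have "sin y \<noteq> 0" and "y \<noteq> 0"
    using assms(4) by auto
  then show "mu_cond sin y \<le> ereal (1 + 8 * M) * mu_cond sin x"
    using mu_sin_le_of_close[OF assms(1,2,4) close] by (simp add: mu_cond_sin assms(3,4))
qed

theorem amenable_sin_between_zeros:
  assumes "sin a = 0" and "sin b = 0"
  shows "amenable sin {a<..<b}"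
proof -
  define M where "M = max 1 (max \<bar>a\<bar> \<bar>b\<bar>)"
  define C where "C = 1 + 8 * M"
  have "1 \<le> M" and bound: "\<And>x. x \<in> {a<..<b} \<Longrightarrow> \<bar>x\<bar> \<le> M"
    by (auto simp: M_def)
  then have "1 \<le> C"
    by (simp add: C_def)
  have rel_ball: "y \<in> {a<..<b} \<and> mu_cond sin y \<le> ereal C * mu_cond sin x"
    if x: "x \<in> {a<..<b}" and "cond_num sin x < \<infinity>"
      and y: "rel_dist y x < 1 / (ereal C * mu_cond sin x)" for x y
  proof (cases "x = 0")
    case True
    then have "y = 0"
      using y rel_dist_less_ereal_zero_right[of y "1 / C"] \<open>1 \<le> C\<close>
      by (simp add: mu_cond_zero one_ereal_def)
    then show ?thesis
      using True x \<open>1 \<le> C\<close> by (simp add: mu_cond_zero)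
  next
    case False
    then have "sin x \<noteq> 0"
      using \<open>cond_num sin x < \<infinity>\<close> by (auto simp: cond_num_def)
    note ball = mu_cond_sin_rel_ball[OF bound[OF x] \<open>1 \<le> M\<close> False this y[unfolded C_def]]
    show ?thesis
      using mem_interval_of_abs_diff_less_abs_sin[OF assms x ball(1)] ball(2) by (simp add: C_def)
  qed
  moreover have "0 < C"
    using \<open>1 \<le> C\<close> by simp
  ultimately show ?thesis
    unfolding amenable_def Let_def by blast
qed

theorem mainTheorem9:
  fixes k1 k2 :: int
  assumes "k1 < k2"
  shows "amenable sin {real_of_int k1 * pi <..< real_of_int k2 * pi}"
  by (intro amenable_sin_between_zeros) (simp_all add: sin_times_pi_eq_0)

end
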